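(* Let $N \geq 1$ and $0 \leq M < N$ be integers, let $\lambda(t) > 0$, and let $\mathbf{X}_t = \sum_{i=1}^N X_t^i \geq 0$ be the (deterministic) sum of the measurements $X_t^1,\dots,X_t^N$ of $N$ users in time slot $t$. Each user $i$ releases $\hat{X}_t^i = X_t^i + \mathcal{G}_1^{(i)} - \mathcal{G}_2^{(i)}$, where the $2N$ random variables $\mathcal{G}_1^{(1)},\mathcal{G}_2^{(1)},\dots,\mathcal{G}_1^{(N)},\mathcal{G}_2^{(N)}$ are mutually independent and each is distributed as $\mathcal{G}(N-M,\lambda(t))$. Let $\hat{\mathbf{X}}_t = \sum_{i=1}^N \hat{X}_t^i$, $\delta_t = \frac{|\mathbf{X}_t - \hat{\mathbf{X}}_t|}{\mathbf{X}_t + 1}$, $\mu(t) = \mathbb{E}(\delta_t)$ and $\sigma(t) = \sqrt{\mathit{Var}(\delta_t)}$. Let $\alpha = M/N$ (so $\alpha<1$). Then $$\mu(t) \leq \frac{2}{B(1/2,\frac{1}{1-\alpha})} \cdot \frac{\lambda(t)}{\mathbf{X}_t + 1}$$ and $$\sigma(t) \leq \sqrt{\frac{2}{1-\alpha} - \frac{4}{B(1/2,\frac{1}{1-\alpha})^2}} \cdot \frac{\lambda(t)}{\mathbf{X}_t + 1},$$ where $B(x,y) = \frac{\Gamma(x)\Gamma(y)}{\Gamma(x+y)}$ is the beta function.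
   Context: For real $n>0$ and $\lambda>0$, $\mathcal{G}(n,\lambda)$ denotes the gamma distribution with probability density $g(x,n,\lambda) = \frac{(1/\lambda)^{1/n}}{\Gamma(1/n)} x^{\frac{1}{n}-1} e^{-x/\lambda}$ for $x \geq 0$ (i.e., shape parameter $1/n$ and scale parameter $\lambda$). Expectation and variance are taken over the randomness of the gamma noise. *)

theory Defs
  imports "HOL-Probability.Probability"
begin

text \<open>Density of the gamma distribution G(n, lambda) of the paper:
  shape 1/n, scale lambda; zero for negative arguments.\<close>
definition gamma_density :: "real \<Rightarrow> real \<Rightarrow> real \<Rightarrow> real" where
  "gamma_density n lam x =
     (if x \<ge> 0 then (1 / lam) powr (1 / n) / Gamma (1 / n) * x powr (1 / n - 1) * exp (- x / lam)
      else 0)"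

end

theory Submission
  imports Defs
begin

text \<open>The noise sums S1 = \<Sum>i G1 i and S2 = \<Sum>i G2 i are independent, and since gamma
  laws of a common scale are closed under independent sums, both are gamma distributed with
  shape k = N / (N - M) = 1 / (1 - \<alpha>) and scale \<lambda>. As Xs - Xhat = S2 - S1, both bounds in
  fact hold with equality: E (S1 - S2)^2 = Var S1 + Var S2 = 2 k \<lambda>^2, and
  E \<bar>S1 - S2\<bar> = 2 \<lambda> / B(1/2, k). For the latter, substituting z = x + y in the double
  integral against the joint density leaves the inner integral
  \<integral>_0^z (x (z - x))^(k - 1) \<bar>2 x - z\<bar> dx = 2 (z / 2)^(2 k) / k, whose integrand has the antiderivative
  \<plusminus>(x (z - x))^k / k on either half of [0, z]. The remaining integral over z is again a gamma
  integral, and Legendre's duplication formula turns the resulting Gamma quotient into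
  the Beta function.\<close>

definition gamma_pdf :: "real \<Rightarrow> real \<Rightarrow> real \<Rightarrow> real" where
  "gamma_pdf k l x = (if 0 \<le> x then x powr (k - 1) * exp (- x / l) / (Gamma k * l powr k) else 0)"

lemma gamma_density_eq_gamma_pdf:
  assumes "n > 0" "l > 0"
  shows "gamma_density n l x = gamma_pdf (1 / n) l x"
  using assms by (simp add: gamma_density_def gamma_pdf_def powr_divide)

lemma gamma_pdf_measurable [measurable]: "gamma_pdf k l \<in> borel_measurable borel"
  unfolding gamma_pdf_def by measurable

lemma gamma_pdf_nonneg: "k > 0 \<Longrightarrow> l > 0 \<Longrightarrow> 0 \<le> gamma_pdf k l x"
  by (simp add: gamma_pdf_def)

lemma gamma_pdf_nonpos: "x \<le> 0 \<Longrightarrow> gamma_pdf k l x = 0"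
  by (simp add: gamma_pdf_def)

lemma nn_integral_gamma_kernel:
  assumes s: "s > 0" and l: "l > 0"
  shows "(\<integral>\<^sup>+x. ennreal (indicator {0..} x * x powr (s - 1) * exp (- x / l)) \<partial>lborel)
         = ennreal (l powr s * Gamma s)"
proof -
  have "(\<integral>\<^sup>+x. ennreal (indicator {0..} x * x powr (s - 1) * exp (- x / l)) \<partial>lborel)
     = ennreal l * (\<integral>\<^sup>+x. ennreal (indicator {0..} (0 + l * x) * (0 + l * x) powr (s - 1)
                                       * exp (- (0 + l * x) / l)) \<partial>lborel)"
    using l by (subst nn_integral_real_affine[where c = l and t = 0]) auto
  also have "\<dots> = ennreal l * (\<integral>\<^sup>+x. ennreal (l powr (s - 1))
                     * ennreal (indicator {0..} x * x powr (s - 1) / exp x) \<partial>lborel)"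
    using l by (intro arg_cong2[where f="(*)"] refl nn_integral_cong)
      (auto simp: indicator_def powr_mult ennreal_mult[symmetric] exp_minus field_simps zero_le_mult_iff)
  also have "\<dots> = ennreal l * (ennreal (l powr (s - 1)) * ennreal (Gamma s))"
    using s by (subst nn_integral_cmult) (auto simp: Gamma_conv_nn_integral_real)
  also have "\<dots> = ennreal (l powr s * Gamma s)"
    using l s by (simp add: ennreal_mult[symmetric] less_imp_le powr_diff mult.assoc)
  finally show ?thesis .
qed

lemma nn_integral_gamma_pdf_moment:
  assumes k: "k > 0" and l: "l > 0"
  shows "(\<integral>\<^sup>+x. ennreal (gamma_pdf k l x * x ^ n) \<partial>lborel) = ennreal (l ^ n * Gamma (k + n) / Gamma k)"
proof -
  have "(\<integral>\<^sup>+x. ennreal (gamma_pdf k l x * x ^ n) \<partial>lborel)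
     = (\<integral>\<^sup>+x. ennreal (1 / (Gamma k * l powr k))
          * ennreal (indicator {0..} x * x powr (k + n - 1) * exp (- x / l)) \<partial>lborel)"
  proof (intro nn_integral_cong)
    fix x :: real
    have "x powr (k - 1) * x ^ n = x powr (k + n - 1)" if "x \<ge> 0"
      using that by (cases "x = 0") (auto simp: powr_realpow[symmetric] powr_add[symmetric] algebra_simps)
    then show "ennreal (gamma_pdf k l x * x ^ n) = ennreal (1 / (Gamma k * l powr k))
          * ennreal (indicator {0..} x * x powr (k + n - 1) * exp (- x / l))"
      using k l by (auto simp: gamma_pdf_def ennreal_mult[symmetric] indicator_def field_simps)
  qed
  also have "\<dots> = ennreal (1 / (Gamma k * l powr k) * (l powr (k + n) * Gamma (k + n)))"
    using k l nn_integral_gamma_kernel[of "k + n" l]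
    by (subst nn_integral_cmult) (auto simp: ennreal_mult[symmetric])
  also have "1 / (Gamma k * l powr k) * (l powr (k + n) * Gamma (k + n)) = l ^ n * Gamma (k + n) / Gamma k"
    using k l by (simp add: powr_add powr_realpow field_simps)
  finally show ?thesis .
qed

lemma nn_integral_gamma_pdf:
  assumes "k > 0" "l > 0"
  shows "(\<integral>\<^sup>+x. ennreal (gamma_pdf k l x) \<partial>lborel) = 1"
  using nn_integral_gamma_pdf_moment[OF assms, of 0] Gamma_real_pos[OF assms(1)] by simp

lemma prob_space_gamma_pdf:
  assumes "k > 0" "l > 0"
  shows "prob_space (density lborel (gamma_pdf k l))"
  by standard (simp add: emeasure_density nn_integral_gamma_pdf[OF assms])

lemma gamma_pdf_convolution_integrand:
  assumes x: "x > 0" and t: "0 \<le> t" "t \<le> 1" and l: "l > 0" and a: "a > 0" and b: "b > 0"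
  shows "x * (gamma_pdf a l (x - x * t) * gamma_pdf b l (x * t)) =
    Gamma (a + b) / (Gamma a * Gamma b) * gamma_pdf (a + b) l x * ((1 - t) powr (a - 1) * t powr (b - 1))"
proof -
  have "(x * (1 - t)) powr (a - 1) = x powr (a - 1) * (1 - t) powr (a - 1)"
       "(x * t) powr (b - 1) = x powr (b - 1) * t powr (b - 1)"
    using x t by (simp_all add: powr_mult)
  moreover have "x * (x powr (a - 1) * x powr (b - 1)) = x powr (a + b - 1)"
    using x by (simp add: powr_add[symmetric] powr_mult_base)
  moreover have "exp (- (x * (1 - t)) / l) * exp (- (x * t) / l) = exp (- x / l)"
    using l by (simp add: exp_add[symmetric] field_simps)
  moreover have "x - x * t = x * (1 - t)"
    by (simp add: algebra_simps)
  moreover have "Gamma a > 0" "Gamma b > 0" "Gamma (a + b) > 0"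
    using a b by simp_all
  ultimately show ?thesis
    using x t l by (simp add: gamma_pdf_def powr_add field_simps del: Gamma_real_pos)
qed

lemma convolution_gamma_pdf_pos:
  assumes x: "x > 0" and l: "l > 0" and a: "a > 0" and b: "b > 0"
  shows "(\<integral>\<^sup>+y. ennreal (gamma_pdf a l (x - y)) * ennreal (gamma_pdf b l y) \<partial>lborel) =
    ennreal (Gamma (a + b) / (Gamma a * Gamma b) * gamma_pdf (a + b) l x) *
    (\<integral>\<^sup>+t. ennreal (indicator {0..1} t * ((1 - t) powr (a - 1) * t powr (b - 1))) \<partial>lborel)"
proof -
  let ?f = "\<lambda>y. gamma_pdf a l (x - y) * gamma_pdf b l y * indicator {0..x} y"
  have "(\<integral>\<^sup>+y. ennreal (gamma_pdf a l (x - y)) * ennreal (gamma_pdf b l y) \<partial>lborel)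
      = (\<integral>\<^sup>+y. ennreal (?f y) \<partial>lborel)"
  proof (intro nn_integral_cong)
    fix y :: real
    show "ennreal (gamma_pdf a l (x - y)) * ennreal (gamma_pdf b l y) = ennreal (?f y)"
      using a b l gamma_pdf_nonpos[of y b l] gamma_pdf_nonpos[of "x - y" a l]
      by (cases "0 \<le> y \<and> y \<le> x") (auto simp: ennreal_mult[symmetric] gamma_pdf_nonneg)
  qed
  also have "\<dots> = ennreal x * (\<integral>\<^sup>+t. ennreal (?f (0 + x * t)) \<partial>lborel)"
    using x by (subst nn_integral_real_affine[where c = x and t = 0]) auto
  also have "\<dots> = (\<integral>\<^sup>+t. ennreal (Gamma (a + b) / (Gamma a * Gamma b) * gamma_pdf (a + b) l x) *
      ennreal (indicator {0..1} t * ((1 - t) powr (a - 1) * t powr (b - 1))) \<partial>lborel)"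
  proof (subst nn_integral_cmult[symmetric], simp, intro nn_integral_cong)
    fix t :: real
    have "x * ?f (x * t) = Gamma (a + b) / (Gamma a * Gamma b) * gamma_pdf (a + b) l x *
        (indicator {0..1} t * ((1 - t) powr (a - 1) * t powr (b - 1)))"
    proof (cases "0 \<le> t \<and> t \<le> 1")
      case True
      then show ?thesis
        using gamma_pdf_convolution_integrand[OF x _ _ l a b, of t] x
        by (simp add: mult_left_le)
    next
      case False
      then show ?thesis
        using x by (auto simp: indicator_def zero_le_mult_iff mult_le_cancel_left1)
    qed
    then show "ennreal x * ennreal (?f (0 + x * t)) = ennreal (Gamma (a + b) / (Gamma a * Gamma b) *
        gamma_pdf (a + b) l x) * ennreal (indicator {0..1} t * ((1 - t) powr (a - 1) * t powr (b - 1)))"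
      using x a b l by (simp add: ennreal_mult[symmetric] gamma_pdf_nonneg mult.assoc)
  qed
  also have "\<dots> = ennreal (Gamma (a + b) / (Gamma a * Gamma b) * gamma_pdf (a + b) l x) *
    (\<integral>\<^sup>+t. ennreal (indicator {0..1} t * ((1 - t) powr (a - 1) * t powr (b - 1))) \<partial>lborel)"
    by (rule nn_integral_cmult) simp
  finally show ?thesis .
qed

lemma convolution_gamma_pdf:
  assumes l: "l > 0" and a: "a > 0" and b: "b > 0"
  shows "(\<lambda>x. \<integral>\<^sup>+y. ennreal (gamma_pdf a l (x - y)) * ennreal (gamma_pdf b l y) \<partial>lborel) =
    (\<lambda>x. ennreal (gamma_pdf (a + b) l x))" (is "?conv = _")
proof -
  define K where "K = Gamma (a + b) / (Gamma a * Gamma b)"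
  define I where "I = (\<integral>\<^sup>+t. ennreal (indicator {0..1} t * ((1 - t) powr (a - 1) * t powr (b - 1))) \<partial>lborel)"
  have conv: "?conv x = ennreal (K * gamma_pdf (a + b) l x) * I" for x
  proof (cases "x > 0")
    case True
    then show ?thesis
      unfolding K_def I_def by (rule convolution_gamma_pdf_pos[OF _ l a b])
  next
    case False
    have "(\<lambda>y. ennreal (gamma_pdf a l (x - y)) * ennreal (gamma_pdf b l y)) = (\<lambda>y. 0)"
    proof
      fix y show "ennreal (gamma_pdf a l (x - y)) * ennreal (gamma_pdf b l y) = 0"
        using False by (cases "y \<le> 0") (simp_all add: gamma_pdf_nonpos)
    qed
    then show ?thesis
      using False by (simp add: gamma_pdf_nonpos)
  qed
  have "K \<ge> 0"
    using a b by (simp add: K_def)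
  with a b l have conv': "?conv x = ennreal (gamma_pdf (a + b) l x) * (ennreal K * I)" for x
    unfolding conv by (simp add: ennreal_mult gamma_pdf_nonneg ac_simps)
  txt \<open>The Beta integral \<open>I\<close> need not be evaluated: both sides are probability densities,
    so the proportionality constant is \<open>1\<close>.\<close>
  have "prob_space (density lborel ?conv)"
    using a b l by (intro prob_space_convolution_density) (auto simp: prob_space_gamma_pdf)
  then have "1 = (\<integral>\<^sup>+x. ?conv x \<partial>lborel)"
    by (auto dest!: prob_space.emeasure_space_1 simp: emeasure_density)
  also have "\<dots> = ennreal K * I"
    using a b l unfolding conv' by (simp add: nn_integral_multc nn_integral_gamma_pdf)
  finally show ?thesis
    by (simp add: fun_eq_iff conv')
qed

lemma (in prob_space) distributed_add_gamma:
  assumes "indep_var borel X borel Y" and "l > 0" "a > 0" "b > 0"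
    and "distributed M lborel X (\<lambda>x. ennreal (gamma_pdf a l x))"
    and "distributed M lborel Y (\<lambda>x. ennreal (gamma_pdf b l x))"
  shows "distributed M lborel (\<lambda>\<omega>. X \<omega> + Y \<omega>) (\<lambda>x. ennreal (gamma_pdf (a + b) l x))"
  using distributed_convolution[OF assms(1,5,6)] by (simp add: convolution_gamma_pdf assms)

lemma (in prob_space) distributed_sum_gamma:
  assumes "finite I" "I \<noteq> {}" "l > 0" "\<And>i. i \<in> I \<Longrightarrow> a i > 0"
    and "\<And>i. i \<in> I \<Longrightarrow> distributed M lborel (X i) (\<lambda>x. ennreal (gamma_pdf (a i) l x))"
    and "indep_vars (\<lambda>i. borel) X I"
  shows "distributed M lborel (\<lambda>\<omega>. \<Sum>i\<in>I. X i \<omega>) (\<lambda>x. ennreal (gamma_pdf (\<Sum>i\<in>I. a i) l x))"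
  using assms
proof (induct rule: finite_ne_induct)
  case (insert i I)
  have "distributed M lborel (\<lambda>\<omega>. X i \<omega> + (\<Sum>i\<in>I. X i \<omega>))
      (\<lambda>x. ennreal (gamma_pdf (a i + (\<Sum>i\<in>I. a i)) l x))"
    using insert by (intro distributed_add_gamma indep_vars_sum sum_pos)
      (auto intro: indep_vars_subset)
  then show ?case
    using insert by simp
qed auto

lemma (in prob_space) indep_var_sum_disjoint:
  fixes X :: "'i \<Rightarrow> 'a \<Rightarrow> real"
  assumes "indep_vars (\<lambda>_. borel) X I" "A \<inter> B = {}" "A \<subseteq> I" "B \<subseteq> I"
  shows "indep_var borel (\<lambda>\<omega>. \<Sum>i\<in>A. X i \<omega>) borel (\<lambda>\<omega>. \<Sum>i\<in>B. X i \<omega>)"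
proof -
  have "indep_var borel ((\<lambda>f. \<Sum>i\<in>A. f i) \<circ> (\<lambda>\<omega>. restrict (\<lambda>i. X i \<omega>) A))
                  borel ((\<lambda>f. \<Sum>i\<in>B. f i) \<circ> (\<lambda>\<omega>. restrict (\<lambda>i. X i \<omega>) B))"
    using assms by (intro indep_var_compose[OF indep_var_restrict]) auto
  then show ?thesis
    by (simp add: comp_def cong: sum.cong)
qed

lemma (in prob_space) indep_distributed_gamma_sums:
  fixes G1 G2 :: "'i \<Rightarrow> 'a \<Rightarrow> real" and a l :: real
  assumes indep: "indep_vars (\<lambda>_. borel) (\<lambda>(b, i). if b then G1 i else G2 i) (UNIV \<times> I)"
    and I: "finite I" "I \<noteq> {}" and a: "a > 0" and l: "l > 0"
    and G1: "\<forall>i\<in>I. distributed M lborel (G1 i) (\<lambda>x. ennreal (gamma_pdf a l x))"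
    and G2: "\<forall>i\<in>I. distributed M lborel (G2 i) (\<lambda>x. ennreal (gamma_pdf a l x))"
  shows "distributed M lborel (\<lambda>\<omega>. \<Sum>i\<in>I. G1 i \<omega>) (\<lambda>x. ennreal (gamma_pdf (real (card I) * a) l x))"
    and "distributed M lborel (\<lambda>\<omega>. \<Sum>i\<in>I. G2 i \<omega>) (\<lambda>x. ennreal (gamma_pdf (real (card I) * a) l x))"
    and "indep_var borel (\<lambda>\<omega>. \<Sum>i\<in>I. G1 i \<omega>) borel (\<lambda>\<omega>. \<Sum>i\<in>I. G2 i \<omega>)"
proof -
  define F :: "bool \<times> 'i \<Rightarrow> 'a \<Rightarrow> real" where "F = (\<lambda>(b, i). if b then G1 i else G2 i)"
  have slice: "(\<lambda>\<omega>. \<Sum>j\<in>{b} \<times> I. F j \<omega>) = (\<lambda>\<omega>. \<Sum>i\<in>I. F (b, i) \<omega>)" for b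
  proof -
    have "{b} \<times> I = Pair b ` I"
      by auto
    then show ?thesis
      by (simp add: sum.reindex inj_on_def)
  qed
  have "distributed M lborel (\<lambda>\<omega>. \<Sum>i\<in>I. F (b, i) \<omega>) (\<lambda>x. ennreal (gamma_pdf (real (card I) * a) l x))" for b
  proof -
    have "indep_vars (\<lambda>_. borel) F ({b} \<times> I)"
      using indep unfolding F_def by (rule indep_vars_subset) auto
    moreover have "distributed M lborel (F j) (\<lambda>x. ennreal (gamma_pdf a l x))" if "j \<in> {b} \<times> I" for j
      using that G1 G2 by (auto simp: F_def)
    ultimately have "distributed M lborel (\<lambda>\<omega>. \<Sum>j\<in>{b} \<times> I. F j \<omega>)
        (\<lambda>x. ennreal (gamma_pdf (\<Sum>j\<in>{b} \<times> I. a) l x))"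
      using I a l by (intro distributed_sum_gamma) auto
    then show ?thesis
      by (simp add: slice card_cartesian_product_singleton)
  qed
  from this[of True] this[of False] show
    "distributed M lborel (\<lambda>\<omega>. \<Sum>i\<in>I. G1 i \<omega>) (\<lambda>x. ennreal (gamma_pdf (real (card I) * a) l x))"
    "distributed M lborel (\<lambda>\<omega>. \<Sum>i\<in>I. G2 i \<omega>) (\<lambda>x. ennreal (gamma_pdf (real (card I) * a) l x))"
    by (simp_all add: F_def)
  have "indep_var borel (\<lambda>\<omega>. \<Sum>j\<in>{True} \<times> I. F j \<omega>) borel (\<lambda>\<omega>. \<Sum>j\<in>{False} \<times> I. F j \<omega>)"
    using indep unfolding F_def[symmetric] by (rule indep_var_sum_disjoint) auto
  then show "indep_var borel (\<lambda>\<omega>. \<Sum>i\<in>I. G1 i \<omega>) borel (\<lambda>\<omega>. \<Sum>i\<in>I. G2 i \<omega>)"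
    unfolding slice by (simp add: F_def)
qed

lemma Gamma_plus1_pos: "k > 0 \<Longrightarrow> Gamma (k + 1) = k * Gamma (k :: real)"
  by (rule Gamma_plus1) (auto dest: nonpos_Ints_nonpos)

lemma (in prob_space) gamma_distributed_power:
  assumes X: "distributed M lborel X (\<lambda>x. ennreal (gamma_pdf k l x))" and k: "k > 0" and l: "l > 0"
  shows "integrable M (\<lambda>\<omega>. X \<omega> ^ n)"
    and "expectation (\<lambda>\<omega>. X \<omega> ^ n) = l ^ n * Gamma (k + n) / Gamma k"
proof -
  have "0 \<le> gamma_pdf k l x * x ^ n" for x
    using k l by (cases "x \<le> 0") (simp_all add: gamma_pdf_nonpos gamma_pdf_nonneg)
  then have "has_bochner_integral lborel (\<lambda>x. gamma_pdf k l x * x ^ n) (l ^ n * Gamma (k + n) / Gamma k)"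
    using k l by (intro has_bochner_integral_nn_integral nn_integral_gamma_pdf_moment) auto
  moreover note distributed_integrable[OF X, of "\<lambda>x. x ^ n"] distributed_integral[OF X, of "\<lambda>x. x ^ n"]
  ultimately show "integrable M (\<lambda>\<omega>. X \<omega> ^ n)"
    and "expectation (\<lambda>\<omega>. X \<omega> ^ n) = l ^ n * Gamma (k + n) / Gamma k"
    using k l by (auto simp: gamma_pdf_nonneg has_bochner_integral_iff)
qed

lemma (in prob_space) gamma_distributed_moments:
  assumes X: "distributed M lborel X (\<lambda>x. ennreal (gamma_pdf k l x))" and k: "k > 0" and l: "l > 0"
  shows "integrable M X" "expectation X = k * l"
    and "integrable M (\<lambda>\<omega>. (X \<omega>)\<^sup>2)" "expectation (\<lambda>\<omega>. (X \<omega>)\<^sup>2) = k * (k + 1) * l\<^sup>2"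
proof -
  have Gamma_k: "Gamma k \<noteq> 0"
    using Gamma_real_pos[OF k] by linarith
  show "expectation X = k * l"
    using gamma_distributed_power(2)[OF X k l, of 1] Gamma_k by (simp add: Gamma_plus1_pos[OF k])
  have "Gamma (k + 2) = (k + 1) * k * Gamma k"
    using Gamma_plus1_pos[of "k + 1"] Gamma_plus1_pos[OF k] k by (simp add: add.assoc)
  with Gamma_k have "l\<^sup>2 * Gamma (k + 2) / Gamma k = k * (k + 1) * l\<^sup>2"
    by (simp add: field_simps)
  then show "expectation (\<lambda>\<omega>. (X \<omega>)\<^sup>2) = k * (k + 1) * l\<^sup>2"
    using gamma_distributed_power(2)[OF X k l, of 2] by simp
  show "integrable M X" "integrable M (\<lambda>\<omega>. (X \<omega>)\<^sup>2)"
    using gamma_distributed_power(1)[OF X k l, of 1] gamma_distributed_power(1)[OF X k l, of 2] by simp_all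
qed

lemma (in prob_space) expectation_square_diff_indep_gamma:
  assumes indep: "indep_var borel X borel Y" and k: "k > 0" and l: "l > 0"
    and X: "distributed M lborel X (\<lambda>x. ennreal (gamma_pdf k l x))"
    and Y: "distributed M lborel Y (\<lambda>x. ennreal (gamma_pdf k l x))"
  shows "integrable M (\<lambda>\<omega>. (X \<omega> - Y \<omega>)\<^sup>2)"
    and "expectation (\<lambda>\<omega>. (X \<omega> - Y \<omega>)\<^sup>2) = 2 * k * l\<^sup>2"
proof -
  note mX = gamma_distributed_moments[OF X k l] and mY = gamma_distributed_moments[OF Y k l]
  have square: "(\<lambda>\<omega>. (X \<omega> - Y \<omega>)\<^sup>2) = (\<lambda>\<omega>. (X \<omega>)\<^sup>2 + (Y \<omega>)\<^sup>2 - 2 * (X \<omega> * Y \<omega>))"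
    by (simp add: power2_diff fun_eq_iff)
  have "has_bochner_integral M (\<lambda>\<omega>. X \<omega> * Y \<omega>) (expectation X * expectation Y)"
    using indep_var_integrable[OF indep] indep_var_lebesgue_integral[OF indep] mX mY
    by (simp add: has_bochner_integral_iff)
  with mX mY have "has_bochner_integral M (\<lambda>\<omega>. (X \<omega> - Y \<omega>)\<^sup>2)
      (k * (k + 1) * l\<^sup>2 + k * (k + 1) * l\<^sup>2 - 2 * (k * l * (k * l)))"
    unfolding square
    by (intro has_bochner_integral_diff has_bochner_integral_add has_bochner_integral_mult_right)
      (auto simp: has_bochner_integral_iff)
  then show "integrable M (\<lambda>\<omega>. (X \<omega> - Y \<omega>)\<^sup>2)"
    and "expectation (\<lambda>\<omega>. (X \<omega> - Y \<omega>)\<^sup>2) = 2 * k * l\<^sup>2"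
    by (auto simp: has_bochner_integral_iff power2_eq_square algebra_simps)
qed

lemma has_real_derivative_powr_mult_diff:
  fixes z k x :: real
  assumes x: "0 < x" "x < z" and k: "k > 0"
  shows "((\<lambda>x. (x * (z - x)) powr k / k) has_real_derivative
            (x powr (k - 1) * (z - x) powr (k - 1) * (z - 2 * x))) (at x)"
proof -
  have "((\<lambda>x. (x * (z - x)) powr k) has_real_derivative (k * (x * (z - x)) powr (k - 1)) * (z - 2 * x)) (at x)"
    using x by (intro DERIV_chain2[OF has_real_derivative_powr]) (auto intro!: derivative_eq_intros)
  then have "((\<lambda>x. (x * (z - x)) powr k / k) has_real_derivative
      (k * (x * (z - x)) powr (k - 1)) * (z - 2 * x) / k) (at x)"
    by (rule DERIV_cdivide)
  moreover have "(k * (x * (z - x)) powr (k - 1)) * (z - 2 * x) / k =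
      x powr (k - 1) * (z - x) powr (k - 1) * (z - 2 * x)"
    using k x by (simp add: powr_mult)
  ultimately show ?thesis
    by simp
qed

lemma has_integral_powr_mult_diff_abs:
  fixes z k :: real
  assumes z: "z > 0" and k: "k > 0"
  shows "((\<lambda>x. x powr (k - 1) * (z - x) powr (k - 1) * \<bar>2 * x - z\<bar>) has_integral
           2 * (z / 2) powr (2 * k) / k) {0..z}"
proof -
  let ?P = "\<lambda>x. (x * (z - x)) powr k / k"
  let ?h = "\<lambda>x. x powr (k - 1) * (z - x) powr (k - 1) * \<bar>2 * x - z\<bar>"
  have cont: "continuous_on {0..z} ?P"
    using k by (intro continuous_on_divide continuous_on_powr' continuous_intros) auto
  have "(?h has_integral (?P (z/2) - ?P 0)) {0..z/2}"
  proof (rule fundamental_theorem_of_calculus_interior)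
    fix x assume x: "x \<in> {0<..<z/2}"
    then show "(?P has_vector_derivative ?h x) (at x)"
      using has_real_derivative_powr_mult_diff[OF _ _ k, of x z]
      by (simp add: abs_if has_real_derivative_iff_has_vector_derivative[symmetric])
  qed (use z in \<open>auto intro: continuous_on_subset[OF cont]\<close>)
  moreover have "(?h has_integral ((\<lambda>x. - ?P x) z - (\<lambda>x. - ?P x) (z/2))) {z/2..z}"
  proof (rule fundamental_theorem_of_calculus_interior)
    fix x assume x: "x \<in> {z/2<..<z}"
    then show "((\<lambda>x. - ?P x) has_vector_derivative ?h x) (at x)"
      using DERIV_minus[OF has_real_derivative_powr_mult_diff[OF _ _ k, of x z]] z
      by (simp add: abs_if algebra_simps has_real_derivative_iff_has_vector_derivative[symmetric])
  qed (use z in \<open>auto intro!: continuous_on_minus intro: continuous_on_subset[OF cont]\<close>)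
  ultimately have "(?h has_integral ((?P (z/2) - ?P 0) + ((\<lambda>x. - ?P x) z - (\<lambda>x. - ?P x) (z/2)))) {0..z}"
    by (intro has_integral_combine[of 0 "z/2" z]) (use z in auto)
  then have "(?h has_integral 2 * ?P (z/2)) {0..z}"
    by simp
  moreover have "z - z / 2 = z / 2"
    by simp
  then have "?P (z/2) = (z / 2) powr (2 * k) / k"
    by (simp only: mult_2 powr_add powr_mult)
  ultimately show ?thesis
    by (simp only: times_divide_eq_right)
qed

lemma gamma_pdf_mult_reflect:
  assumes l: "l > 0"
  shows "gamma_pdf k l x * gamma_pdf k l (z - x) =
    exp (- z / l) / (Gamma k * l powr k)\<^sup>2 * (indicator {0..z} x * (x powr (k - 1) * (z - x) powr (k - 1)))"
proof (cases "0 \<le> x \<and> x \<le> z")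
  case True
  have "exp (- x / l) * exp (- (z - x) / l) = exp (- z / l)"
    using l by (simp add: exp_add[symmetric] field_simps)
  with True show ?thesis
    by (simp add: gamma_pdf_def power2_eq_square field_simps)
next
  case False
  then show ?thesis
    by (auto simp: gamma_pdf_def)
qed

lemma nn_integral_gamma_pdf_reflect_abs:
  assumes l: "l > 0" and k: "k > 0"
  shows "(\<integral>\<^sup>+x. ennreal (gamma_pdf k l x * gamma_pdf k l (z - x) * \<bar>2 * x - z\<bar>) \<partial>lborel) =
    ennreal (2 / (k * 2 powr (2 * k) * (Gamma k * l powr k)\<^sup>2) *
      (indicator {0..} z * z powr (2 * k + 1 - 1) * exp (- z / l)))"
proof (cases "z > 0")
  case False
  have "(\<lambda>x. ennreal (gamma_pdf k l x * gamma_pdf k l (z - x) * \<bar>2 * x - z\<bar>)) = (\<lambda>x. 0)"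
  proof
    fix x show "ennreal (gamma_pdf k l x * gamma_pdf k l (z - x) * \<bar>2 * x - z\<bar>) = 0"
      using False by (cases "x \<le> 0") (simp_all add: gamma_pdf_nonpos)
  qed
  moreover have rhs: "indicator {0..} z * z powr (2 * k) = (0 :: real)"
    using False by (cases "z = 0") auto
  ultimately show ?thesis
    by (simp add: rhs)
next
  case z: True
  let ?C = "exp (- z / l) / (Gamma k * l powr k)\<^sup>2"
  have "(\<integral>\<^sup>+x. ennreal (gamma_pdf k l x * gamma_pdf k l (z - x) * \<bar>2 * x - z\<bar>) \<partial>lborel) =
      (\<integral>\<^sup>+x. ennreal ?C * ennreal (indicator {0..z} x *
        (x powr (k - 1) * (z - x) powr (k - 1) * \<bar>2 * x - z\<bar>)) \<partial>lborel)"
    by (intro nn_integral_cong) (simp add: gamma_pdf_mult_reflect[OF l] ennreal_mult[symmetric] mult.assoc)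
  also have "\<dots> = ennreal ?C * ennreal (2 * (z / 2) powr (2 * k) / k)"
    using nn_integral_has_integral_lebesgue[OF _ has_integral_powr_mult_diff_abs[OF z k]] k
    by (subst nn_integral_cmult) auto
  also have "\<dots> = ennreal (2 / (k * 2 powr (2 * k) * (Gamma k * l powr k)\<^sup>2) *
      (indicator {0..} z * z powr (2 * k + 1 - 1) * exp (- z / l)))"
    using z k by (simp add: ennreal_mult[symmetric] powr_divide field_simps)
  finally show ?thesis .
qed

lemma Gamma_legendre_duplication_real:
  fixes k :: real
  assumes k: "k > 0"
  shows "Gamma k * Gamma (k + 1/2) = 2 powr (1 - 2 * k) * sqrt pi * Gamma (2 * k)"
proof -
  have "complex_of_real k \<notin> \<int>\<^sub>\<le>\<^sub>0" "complex_of_real (k + 1/2) \<notin> \<int>\<^sub>\<le>\<^sub>0"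
    unfolding of_real_in_nonpos_Ints_iff using k by (auto dest: nonpos_Ints_nonpos)
  then have "Gamma (complex_of_real k) * Gamma (complex_of_real k + 1/2) =
      exp ((1 - 2 * complex_of_real k) * of_real (ln 2)) * of_real (sqrt pi) * Gamma (2 * complex_of_real k)"
    by (intro Gamma_legendre_duplication) simp_all
  also have "Gamma (complex_of_real k) * Gamma (complex_of_real k + 1/2) = of_real (Gamma k * Gamma (k + 1/2))"
    using Gamma_complex_of_real[of "k + 1/2"] by (simp add: Gamma_complex_of_real)
  also have "exp ((1 - 2 * complex_of_real k) * of_real (ln 2)) * of_real (sqrt pi) * Gamma (2 * complex_of_real k)
     = of_real (exp ((1 - 2 * k) * ln 2) * sqrt pi * Gamma (2 * k))"
  proof -
    have e1: "(1 - 2 * complex_of_real k) * of_real (ln 2) = of_real ((1 - 2 * k) * ln 2)"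
      and e2: "2 * complex_of_real k = of_real (2 * k)"
      by simp_all
    show ?thesis
      unfolding e1 unfolding e2 Gamma_complex_of_real exp_of_real by (simp only: of_real_mult)
  qed
  finally have "Gamma k * Gamma (k + 1/2) = exp ((1 - 2 * k) * ln 2) * sqrt pi * Gamma (2 * k)"
    by (simp only: of_real_eq_iff)
  then show ?thesis
    by (simp add: powr_def mult.commute)
qed

lemma Beta_half_eq:
  fixes k :: real
  assumes k: "k > 0"
  shows "Beta (1/2) k = 2 powr (2 * k) * (Gamma k)\<^sup>2 / (2 * Gamma (2 * k))"
proof -
  have "Gamma (k + 1/2) = 2 powr (1 - 2 * k) * sqrt pi * Gamma (2 * k) / Gamma k"
    using Gamma_legendre_duplication_real[OF k] Gamma_real_pos[OF k] by (simp add: field_simps)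
  moreover have "(2 :: real) powr (1 - 2 * k) = 2 / 2 powr (2 * k)"
    by (simp add: powr_diff)
  moreover have "Gamma (2 * k) \<noteq> 0"
    using Gamma_real_pos[of "2 * k"] k by linarith
  ultimately show ?thesis
    using k by (simp add: Beta_def Gamma_one_half_real add.commute power2_eq_square)
qed

lemma nn_integral_gamma_pdf_abs_diff:
  assumes l: "l > 0" and k: "k > 0"
  shows "(\<integral>\<^sup>+x. \<integral>\<^sup>+y. ennreal (gamma_pdf k l x * gamma_pdf k l y * \<bar>x - y\<bar>) \<partial>lborel \<partial>lborel) =
         ennreal (2 * l / Beta (1/2) k)"
proof -
  define C where "C = 2 / (k * 2 powr (2 * k) * (Gamma k * l powr k)\<^sup>2)"
  have "(\<integral>\<^sup>+x. \<integral>\<^sup>+y. ennreal (gamma_pdf k l x * gamma_pdf k l y * \<bar>x - y\<bar>) \<partial>lborel \<partial>lborel) =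
        (\<integral>\<^sup>+x. \<integral>\<^sup>+z. ennreal (gamma_pdf k l x * gamma_pdf k l (z - x) * \<bar>2 * x - z\<bar>) \<partial>lborel \<partial>lborel)"
  proof (rule nn_integral_cong)
    fix x :: real
    have "(\<integral>\<^sup>+y. ennreal (gamma_pdf k l x * gamma_pdf k l y * \<bar>x - y\<bar>) \<partial>lborel) =
      ennreal \<bar>1\<bar> * (\<integral>\<^sup>+z. ennreal (gamma_pdf k l x * gamma_pdf k l (- x + 1 * z) * \<bar>x - (- x + 1 * z)\<bar>) \<partial>lborel)"
      by (rule nn_integral_real_affine) auto
    then show "(\<integral>\<^sup>+y. ennreal (gamma_pdf k l x * gamma_pdf k l y * \<bar>x - y\<bar>) \<partial>lborel) =
       (\<integral>\<^sup>+z. ennreal (gamma_pdf k l x * gamma_pdf k l (z - x) * \<bar>2 * x - z\<bar>) \<partial>lborel)"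
      by (simp add: algebra_simps)
  qed
  also have "\<dots> = (\<integral>\<^sup>+z. \<integral>\<^sup>+x. ennreal (gamma_pdf k l x * gamma_pdf k l (z - x) * \<bar>2 * x - z\<bar>) \<partial>lborel \<partial>lborel)"
    by (rule lborel_pair.Fubini'[symmetric]) measurable
  also have "\<dots> = (\<integral>\<^sup>+z. ennreal C * ennreal (indicator {0..} z * z powr (2 * k + 1 - 1) * exp (- z / l)) \<partial>lborel)"
    unfolding nn_integral_gamma_pdf_reflect_abs[OF l k] C_def
    by (intro nn_integral_cong ennreal_mult) (use k in auto)
  also have "\<dots> = ennreal C * ennreal (l powr (2 * k + 1) * Gamma (2 * k + 1))"
    using l k nn_integral_gamma_kernel[of "2 * k + 1" l] by (subst nn_integral_cmult) auto
  also have "\<dots> = ennreal (C * (l powr (2 * k + 1) * Gamma (2 * k + 1)))"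
    using l k by (intro ennreal_mult[symmetric]) (auto simp: C_def)
  also have "C * (l powr (2 * k + 1) * Gamma (2 * k + 1)) = 2 * l / Beta (1/2) k"
  proof -
    define P where "P = l powr k"
    define Q where "Q = (2::real) powr (2 * k)"
    define G where "G = Gamma k"
    define H where "H = Gamma (2 * k)"
    have "Gamma (2 * k + 1) = 2 * k * H"
      unfolding H_def using k by (intro Gamma_plus1_pos) simp
    moreover have "l powr (2 * k + 1) = P\<^sup>2 * l"
      unfolding P_def mult_2 powr_add using l by (simp add: power2_eq_square)
    moreover have "P > 0" "Q > 0" "G > 0" "H > 0"
      using l k by (simp_all add: P_def Q_def G_def H_def)
    ultimately show ?thesis
      unfolding C_def Beta_half_eq[OF k] P_def[symmetric] Q_def[symmetric] G_def[symmetric] H_def[symmetric]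
      using k l by (simp add: field_simps power2_eq_square)
  qed
  finally show ?thesis .
qed

lemma (in prob_space) nn_integral_indep_var_density:
  assumes indep: "indep_var borel X borel Y"
    and X: "distributed M lborel X (\<lambda>x. ennreal (f x))" and Y: "distributed M lborel Y (\<lambda>y. ennreal (h y))"
    and f: "\<And>x. 0 \<le> f x" and h: "\<And>y. 0 \<le> h y"
    and g: "(\<lambda>p. g (fst p) (snd p)) \<in> borel_measurable (lborel \<Otimes>\<^sub>M lborel)" "\<And>x y. 0 \<le> g x y"
  shows "(\<integral>\<^sup>+\<omega>. ennreal (g (X \<omega>) (Y \<omega>)) \<partial>M) =
         (\<integral>\<^sup>+x. \<integral>\<^sup>+y. ennreal (f x * h y * g x y) \<partial>lborel \<partial>lborel)"
proof -
  have "indep_var lborel X lborel Y"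
    using indep unfolding indep_var_def indep_vars_def by (simp add: measurable_lborel2 bool.case_eq_if)
  then have XY: "distributed M (lborel \<Otimes>\<^sub>M lborel) (\<lambda>\<omega>. (X \<omega>, Y \<omega>)) (\<lambda>(x, y). ennreal (f x) * ennreal (h y))"
    by (intro distributed_joint_indep X Y) (simp_all add: sigma_finite_lborel)
  have [measurable]: "(\<lambda>x. ennreal (f x)) \<in> borel_measurable lborel" "(\<lambda>y. ennreal (h y)) \<in> borel_measurable lborel"
    using distributed_borel_measurable[OF X] distributed_borel_measurable[OF Y] by simp_all
  have [measurable]: "(\<lambda>p. ennreal (g (fst p) (snd p))) \<in> borel_measurable (lborel \<Otimes>\<^sub>M lborel)"
    using g(1) by measurable
  have "(\<integral>\<^sup>+\<omega>. ennreal (g (X \<omega>) (Y \<omega>)) \<partial>M) =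
      (\<integral>\<^sup>+p. ennreal (f (fst p)) * ennreal (h (snd p)) * ennreal (g (fst p) (snd p)) \<partial>(lborel \<Otimes>\<^sub>M lborel))"
    using distributed_nn_integral[OF XY, of "\<lambda>p. ennreal (g (fst p) (snd p))"] by (simp add: case_prod_beta)
  also have "\<dots> = (\<integral>\<^sup>+x. \<integral>\<^sup>+y. ennreal (f x) * ennreal (h y) * ennreal (g x y) \<partial>lborel \<partial>lborel)"
    by (subst lborel.nn_integral_fst[symmetric]) measurable
  also have "\<dots> = (\<integral>\<^sup>+x. \<integral>\<^sup>+y. ennreal (f x * h y * g x y) \<partial>lborel \<partial>lborel)"
    using f h g(2) by (simp add: ennreal_mult)
  finally show ?thesis .
qed

lemma (in prob_space) expectation_abs_diff_indep_gamma:
  assumes indep: "indep_var borel X borel Y" and k: "k > 0" and l: "l > 0"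
    and X: "distributed M lborel X (\<lambda>x. ennreal (gamma_pdf k l x))"
    and Y: "distributed M lborel Y (\<lambda>x. ennreal (gamma_pdf k l x))"
  shows "integrable M (\<lambda>\<omega>. \<bar>X \<omega> - Y \<omega>\<bar>)"
    and "expectation (\<lambda>\<omega>. \<bar>X \<omega> - Y \<omega>\<bar>) = 2 * l / Beta (1/2) k"
proof -
  have [measurable]: "X \<in> borel_measurable M" "Y \<in> borel_measurable M"
    using distributed_measurable[OF X] distributed_measurable[OF Y] by (simp_all add: measurable_lborel2)
  have "(\<integral>\<^sup>+\<omega>. ennreal \<bar>X \<omega> - Y \<omega>\<bar> \<partial>M) = ennreal (2 * l / Beta (1/2) k)"
    using nn_integral_indep_var_density[OF indep X Y, of "\<lambda>x y. \<bar>x - y\<bar>"] k l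
    by (simp add: gamma_pdf_nonneg nn_integral_gamma_pdf_abs_diff)
  moreover have "Beta (1/2) k > 0"
    using k by (simp add: Beta_def)
  ultimately have "has_bochner_integral M (\<lambda>\<omega>. \<bar>X \<omega> - Y \<omega>\<bar>) (2 * l / Beta (1/2) k)"
    using l by (intro has_bochner_integral_nn_integral) auto
  then show "integrable M (\<lambda>\<omega>. \<bar>X \<omega> - Y \<omega>\<bar>)"
    and "expectation (\<lambda>\<omega>. \<bar>X \<omega> - Y \<omega>\<bar>) = 2 * l / Beta (1/2) k"
    by (auto simp: has_bochner_integral_iff)
qed

lemma (in prob_space) mean_variance_scaled_abs_diff_indep_gamma:
  assumes indep: "indep_var borel X borel Y" and k: "k > 0" and l: "l > 0"
    and X: "distributed M lborel X (\<lambda>x. ennreal (gamma_pdf k l x))"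
    and Y: "distributed M lborel Y (\<lambda>x. ennreal (gamma_pdf k l x))"
  shows "expectation (\<lambda>\<omega>. \<bar>X \<omega> - Y \<omega>\<bar> / c) = 2 / Beta (1/2) k * (l / c)"
    and "variance (\<lambda>\<omega>. \<bar>X \<omega> - Y \<omega>\<bar> / c) = (2 * k - 4 / (Beta (1/2) k)\<^sup>2) * (l / c)\<^sup>2"
proof -
  note abs_diff = expectation_abs_diff_indep_gamma[OF assms]
    and square_diff = expectation_square_diff_indep_gamma[OF assms]
  show "expectation (\<lambda>\<omega>. \<bar>X \<omega> - Y \<omega>\<bar> / c) = 2 / Beta (1/2) k * (l / c)"
    using abs_diff by simp
  have "variance (\<lambda>\<omega>. \<bar>X \<omega> - Y \<omega>\<bar> / c) =
      expectation (\<lambda>\<omega>. (X \<omega> - Y \<omega>)\<^sup>2) / c\<^sup>2 - (expectation (\<lambda>\<omega>. \<bar>X \<omega> - Y \<omega>\<bar>) / c)\<^sup>2"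
    using abs_diff(1) square_diff(1) by (subst variance_eq) (simp_all add: power_divide)
  then show "variance (\<lambda>\<omega>. \<bar>X \<omega> - Y \<omega>\<bar> / c) = (2 * k - 4 / (Beta (1/2) k)\<^sup>2) * (l / c)\<^sup>2"
    using abs_diff(2) square_diff(2) by (simp add: power_divide algebra_simps)
qed

theorem theorem2:
  fixes P :: "'a measure" and N M :: nat and lam :: real
    and X :: "nat \<Rightarrow> real" and G1 G2 :: "nat \<Rightarrow> 'a \<Rightarrow> real"
  assumes "prob_space P"
    and "N \<ge> 1" and "M < N" and "lam > 0"
    and "(\<Sum>i=1..N. X i) \<ge> 0"
    and "prob_space.indep_vars P (\<lambda>_. borel) (\<lambda>(b, i). if b then G1 i else G2 i) (UNIV \<times> {1..N})"
    and "\<forall>i\<in>{1..N}. distributed P lborel (G1 i) (\<lambda>x. ennreal (gamma_density (real (N - M)) lam x))"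
    and "\<forall>i\<in>{1..N}. distributed P lborel (G2 i) (\<lambda>x. ennreal (gamma_density (real (N - M)) lam x))"
  defines "Xs \<equiv> \<Sum>i=1..N. X i"
    and "Xhat \<equiv> \<lambda>\<omega>. \<Sum>i=1..N. (X i + G1 i \<omega> - G2 i \<omega>)"
    and "\<alpha> \<equiv> real M / real N"
  shows "prob_space.expectation P (\<lambda>\<omega>. \<bar>Xs - Xhat \<omega>\<bar> / (Xs + 1))
           \<le> 2 / Beta (1/2) (1 / (1 - \<alpha>)) * (lam / (Xs + 1))
         \<and> sqrt (prob_space.variance P (\<lambda>\<omega>. \<bar>Xs - Xhat \<omega>\<bar> / (Xs + 1)))
           \<le> sqrt (2 / (1 - \<alpha>) - 4 / (Beta (1/2) (1 / (1 - \<alpha>)))\<^sup>2) * (lam / (Xs + 1))"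
proof -
  interpret prob_space P by fact
  define k where "k = 1 / (1 - \<alpha>)"
  have shape: "real (card {1..N}) * (1 / real (N - M)) = k" "k > 0"
    using assms(2,3) by (auto simp: k_def \<alpha>_def of_nat_diff field_simps)
  have noise: "\<forall>i\<in>{1..N}. distributed P lborel (G1 i) (\<lambda>x. ennreal (gamma_pdf (1 / real (N - M)) lam x))"
    "\<forall>i\<in>{1..N}. distributed P lborel (G2 i) (\<lambda>x. ennreal (gamma_pdf (1 / real (N - M)) lam x))"
    using assms(3,4,7,8) by (simp_all add: gamma_density_eq_gamma_pdf)
  have "finite {1..N}" "{1..N} \<noteq> {}" "1 / real (N - M) > 0"
    using assms(2,3) by auto
  note sums = indep_distributed_gamma_sums[OF assms(6) this assms(4) noise, unfolded shape(1)]
  note delta = mean_variance_scaled_abs_diff_indep_gamma[OF sums(3) shape(2) assms(4) sums(1,2)]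
  have "\<bar>Xs - Xhat \<omega>\<bar> / (Xs + 1) = \<bar>(\<Sum>i=1..N. G1 i \<omega>) - (\<Sum>i=1..N. G2 i \<omega>)\<bar> / (Xs + 1)" for \<omega>
    by (simp add: Xs_def Xhat_def sum.distrib sum_subtractf abs_minus_commute)
  then show ?thesis
    using delta assms(4,5) shape(2) by (simp add: Xs_def k_def real_sqrt_mult)
qed

end
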